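(* Let $\mathbb{H}$ be a finite-dimensional complex Hilbert space with $\dim\mathbb{H}\ge 2$, let $\alpha,\beta$ be nonzero complex numbers with $|\alpha|^2+|\beta|^2=1$, and let $|\phi\rangle\in\mathbb{H}$ be a fixed unit vector (fixed means: independent of the input state $|\psi\rangle$; it may be known or unknown). Then there is no probabilistic quantum transformation $\mathcal{F}$ from $\mathbb{H}\otimes\mathbb{H}$ to $\mathbb{H}$ such that for every pure state $\rho_\psi$ on $\mathbb{H}$, $$\mathcal{F}(\rho_\psi\otimes\rho_\phi)=\rho_\varphi,\qquad |\varphi\rangle\propto \alpha|\psi\rangle+\beta|\phi\rangle .$$
   Context: For a unit vector $|\psi\rangle$, $\rho_\psi=|\psi\rangle\langle\psi|$ denotes the corresponding pure state; vectors differing by a global phase define the same state, and $|\varphi\rangle\propto|\chi\rangle$ means $|\varphi\rangle$ equals the normalization of $|\chi\rangle$ up to a global phase (whenever $|\chi\rangle\neq0$). A probabilistic quantum transformation from $\mathbb{H}_1$ to $\mathbb{H}_2$ is a completely positive, trace-non-increasing linear map $\mathcal{F}$ from operators on $\mathbb{H}_1$ to operators on $\mathbb{H}_2$ (equivalently, a unitary on $\mathbb{H}_1$ tensored with ancilla and probe spaces followed by post-selection on a projective measurement outcome); the equation $\mathcal{F}(\rho)=\sigma$ between pure states means $\mathcal{F}(\rho)=p\,\sigma$ for some success probability $p>0$ (which may depend on $\rho$). *)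

theory Defs
  imports "Jordan_Normal_Form.Matrix"
begin

text \<open>Finite-dimensional complex Hilbert space of dimension d is modelled as
  complex column vectors of length d (carrier_vec d); operators are d x d complex matrices.
  The tensor product C^a (x) C^b is C^(a*b) with index i*b + k for basis pair (i,k).\<close>

definition vnorm_sq :: "complex vec \<Rightarrow> real" where
  "vnorm_sq v = (\<Sum>i<dim_vec v. (cmod (v $ i))^2)"

definition is_unit_vec :: "nat \<Rightarrow> complex vec \<Rightarrow> bool" where
  "is_unit_vec d v \<longleftrightarrow> v \<in> carrier_vec d \<and> vnorm_sq v = 1"

definition outer :: "complex vec \<Rightarrow> complex mat" where
  "outer v = mat (dim_vec v) (dim_vec v) (\<lambda>(i,j). v $ i * cnj (v $ j))"

definition pure_state :: "complex vec \<Rightarrow> complex mat" where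
  "pure_state v = complex_of_real (1 / vnorm_sq v) \<cdot>\<^sub>m outer v"

definition kron :: "complex mat \<Rightarrow> complex mat \<Rightarrow> complex mat" where
  "kron A B = mat (dim_row A * dim_row B) (dim_col A * dim_col B)
     (\<lambda>(i,j). A $$ (i div dim_row B, j div dim_col B) * B $$ (i mod dim_row B, j mod dim_col B))"

definition psd :: "nat \<Rightarrow> complex mat \<Rightarrow> bool" where
  "psd n A \<longleftrightarrow> A \<in> carrier_mat n n \<and>
     (\<forall>v \<in> carrier_vec n. let q = (\<Sum>i<n. \<Sum>j<n. cnj (v $ i) * A $$ (i,j) * v $ j)
                           in Im q = 0 \<and> Re q \<ge> 0)"

text \<open>(id_m (x) F)(X) for X an operator on C^m (x) C^d1 (block (a,b) of size d1 x d1)\<close>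
definition ampliate :: "nat \<Rightarrow> nat \<Rightarrow> nat \<Rightarrow> (complex mat \<Rightarrow> complex mat) \<Rightarrow> complex mat \<Rightarrow> complex mat" where
  "ampliate m d1 d2 F X = mat (m * d2) (m * d2)
     (\<lambda>(i,j). F (mat d1 d1 (\<lambda>(k,l). X $$ ((i div d2) * d1 + k, (j div d2) * d1 + l)))
                $$ (i mod d2, j mod d2))"

definition mtrace :: "complex mat \<Rightarrow> complex" where
  "mtrace A = (\<Sum>i<dim_row A. A $$ (i,i))"

definition quantum_op :: "nat \<Rightarrow> nat \<Rightarrow> (complex mat \<Rightarrow> complex mat) \<Rightarrow> bool" where
  "quantum_op d1 d2 F \<longleftrightarrow>
     (\<forall>A \<in> carrier_mat d1 d1. F A \<in> carrier_mat d2 d2) \<and>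
     (\<forall>A \<in> carrier_mat d1 d1. \<forall>B \<in> carrier_mat d1 d1. \<forall>a b :: complex.
         F (a \<cdot>\<^sub>m A + b \<cdot>\<^sub>m B) = a \<cdot>\<^sub>m F A + b \<cdot>\<^sub>m F B) \<and>
     (\<forall>m. \<forall>X. psd (m * d1) X \<longrightarrow> psd (m * d2) (ampliate m d1 d2 F X)) \<and>
     (\<forall>\<rho>. psd d1 \<rho> \<longrightarrow> Re (mtrace (F \<rho>)) \<le> Re (mtrace \<rho>))"

end

theory Submission
  imports Defs
begin

text \<open>The input \<open>\<rho>\<^sub>\<psi> \<otimes> \<rho>\<^sub>\<phi>\<close> depends on \<open>\<psi>\<close> only up to a global phase, whereas the
  required output does not: for a basis vector \<open>e\<close> orthogonal to some coordinate \<open>j\<close> with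
  \<open>\<phi>\<^sub>j \<noteq> 0\<close>, the inputs for \<open>e\<close> and \<open>-e\<close> coincide, so any map would have to send them to
  proportional outputs; but \<open>\<alpha>e + \<beta>\<phi>\<close> and \<open>-\<alpha>e + \<beta>\<phi>\<close> agree in coordinate \<open>j\<close> and differ in
  coordinate \<open>k\<close> of \<open>e\<close>, so they are not parallel. No property of \<open>\<F>\<close> beyond being a
  function is needed.\<close>

lemma vnorm_sq_pos:
  assumes "j < dim_vec v" "v $ j \<noteq> 0"
  shows "vnorm_sq v > 0"
proof -
  have "(cmod (v $ j))^2 \<le> (\<Sum>i<dim_vec v. (cmod (v $ i))^2)"
    by (rule member_le_sum) (use assms in auto)
  moreover have "(cmod (v $ j))^2 > 0" using assms by simp
  ultimately show ?thesis unfolding vnorm_sq_def by linarith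
qed

lemma is_unit_vec_nonzero_entry:
  assumes "is_unit_vec d v"
  obtains j where "j < d" "v $ j \<noteq> 0"
proof -
  have "\<exists>j<d. v $ j \<noteq> 0"
  proof (rule ccontr)
    assume "\<not> (\<exists>j<d. v $ j \<noteq> 0)"
    then have "vnorm_sq v = 0"
      using assms by (auto simp: is_unit_vec_def vnorm_sq_def)
    with assms show False by (simp add: is_unit_vec_def)
  qed
  with that show thesis by blast
qed

lemma is_unit_vec_unit_vec:
  assumes "k < d"
  shows "is_unit_vec d (unit_vec d k)"
proof -
  have "(\<Sum>i<d. (cmod (unit_vec d k $ i))^2) = (\<Sum>i<d. if i = k then 1 else 0)"
    by (rule sum.cong) (auto simp: unit_vec_def)
  also have "\<dots> = 1" using assms by simp
  finally show ?thesis unfolding is_unit_vec_def vnorm_sq_def by simp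
qed

lemma is_unit_vec_smult:
  assumes "cmod c = 1" "is_unit_vec d v"
  shows "is_unit_vec d (c \<cdot>\<^sub>v v)"
  using assms by (simp add: is_unit_vec_def vnorm_sq_def norm_mult)

lemma outer_smult_unimodular:
  assumes "cmod c = 1"
  shows "outer (c \<cdot>\<^sub>v v) = outer v"
proof -
  have "c * cnj c = 1"
    using assms by (metis complex_norm_square mult.commute of_real_1 power_one)
  then show ?thesis
    unfolding outer_def by (intro eq_matI) (auto simp: algebra_simps)
qed

lemma scaled_pure_state_index:
  assumes "i < dim_vec v" "j < dim_vec v"
  shows "(complex_of_real p \<cdot>\<^sub>m pure_state v) $$ (i,j)
        = complex_of_real (p / vnorm_sq v) * (v $ i * cnj (v $ j))"
  using assms unfolding pure_state_def outer_def
  by (simp add: of_real_mult[symmetric] del: of_real_mult)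

lemma scaled_pure_states_eq_parallel:
  assumes eq: "complex_of_real p \<cdot>\<^sub>m pure_state x = complex_of_real q \<cdot>\<^sub>m pure_state y"
    and "p > 0" and j: "j < dim_vec x" and k: "k < dim_vec x" and xj: "x $ j \<noteq> 0"
  shows "x $ k * y $ j = y $ k * x $ j"
proof -
  have "dim_vec y = dim_vec x"
    using arg_cong[OF eq, of dim_row] by (simp add: pure_state_def outer_def)
  define a where "a = complex_of_real (p / vnorm_sq x)"
  define b where "b = complex_of_real (q / vnorm_sq y)"
  have "vnorm_sq x > 0" using vnorm_sq_pos[OF j xj] .
  with \<open>p > 0\<close> have "a \<noteq> 0" by (simp add: a_def)
  have jj: "a * (x $ j * cnj (x $ j)) = b * (y $ j * cnj (y $ j))"
    using arg_cong[OF eq, of "\<lambda>M. M $$ (j,j)"] j \<open>dim_vec y = dim_vec x\<close>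
    by (simp add: scaled_pure_state_index a_def b_def)
  have kj: "a * (x $ k * cnj (x $ j)) = b * (y $ k * cnj (y $ j))"
    using arg_cong[OF eq, of "\<lambda>M. M $$ (k,j)"] j k \<open>dim_vec y = dim_vec x\<close>
    by (simp add: scaled_pure_state_index a_def b_def)
  have "a * cnj (x $ j) \<noteq> 0" using \<open>a \<noteq> 0\<close> xj by simp
  moreover have "(a * cnj (x $ j)) * (x $ k * y $ j) = (a * cnj (x $ j)) * (y $ k * x $ j)"
  proof -
    have "(a * cnj (x $ j)) * (x $ k * y $ j) = (b * (y $ k * cnj (y $ j))) * y $ j"
      using kj by (simp add: algebra_simps)
    also have "\<dots> = (b * (y $ j * cnj (y $ j))) * y $ k"
      by (simp add: algebra_simps)
    also have "\<dots> = (a * cnj (x $ j)) * (y $ k * x $ j)"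
      using jj by (simp add: algebra_simps)
    finally show ?thesis .
  qed
  ultimately show ?thesis by simp
qed

lemma no_phase_insensitive_superposition:
  fixes \<alpha> \<beta> :: complex
  assumes "k < d" and "j < d" and "k \<noteq> j"
    and \<phi>: "\<phi> \<in> carrier_vec d" and "\<phi> $ j \<noteq> 0"
    and "\<alpha> \<noteq> 0" and "\<beta> \<noteq> 0"
  shows "\<not> (\<forall>\<psi>. is_unit_vec d \<psi> \<and> \<alpha> \<cdot>\<^sub>v \<psi> + \<beta> \<cdot>\<^sub>v \<phi> \<noteq> 0\<^sub>v d \<longrightarrow>
               (\<exists>p::real. p > 0 \<and>
                  F (kron (outer \<psi>) (outer \<phi>)) = complex_of_real p \<cdot>\<^sub>m pure_state (\<alpha> \<cdot>\<^sub>v \<psi> + \<beta> \<cdot>\<^sub>v \<phi>)))"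
    (is "\<not> (\<forall>\<psi>. ?admissible \<psi> \<longrightarrow> ?maps \<psi>)")
proof
  assume H: "\<forall>\<psi>. ?admissible \<psi> \<longrightarrow> ?maps \<psi>"
  define e :: "complex vec" where "e = unit_vec d k"
  define x where "x = \<alpha> \<cdot>\<^sub>v e + \<beta> \<cdot>\<^sub>v \<phi>"
  define y where "y = \<alpha> \<cdot>\<^sub>v ((-1) \<cdot>\<^sub>v e) + \<beta> \<cdot>\<^sub>v \<phi>"
  have unit: "cmod (-1 :: complex) = 1" by simp
  have dx: "dim_vec x = d" using \<phi> by (simp add: x_def e_def)
  have xj: "x $ j = \<beta> * \<phi> $ j" and yj: "y $ j = \<beta> * \<phi> $ j"
    using assms by (simp_all add: x_def y_def e_def unit_vec_def)
  have xk: "x $ k = \<alpha> + \<beta> * \<phi> $ k" and yk: "y $ k = - \<alpha> + \<beta> * \<phi> $ k"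
    using assms by (simp_all add: x_def y_def e_def unit_vec_def)
  have "\<beta> * \<phi> $ j \<noteq> 0" using assms by simp
  then have "x \<noteq> 0\<^sub>v d" "y \<noteq> 0\<^sub>v d" using xj yj \<open>j < d\<close> by auto
  obtain p where "p > 0" and p: "F (kron (outer e) (outer \<phi>)) = complex_of_real p \<cdot>\<^sub>m pure_state x"
    using H is_unit_vec_unit_vec[OF \<open>k < d\<close>] \<open>x \<noteq> 0\<^sub>v d\<close> by (auto simp: e_def x_def)
  obtain q where q: "F (kron (outer ((-1) \<cdot>\<^sub>v e)) (outer \<phi>)) = complex_of_real q \<cdot>\<^sub>m pure_state y"
    using H is_unit_vec_smult[OF unit is_unit_vec_unit_vec[OF \<open>k < d\<close>]] \<open>y \<noteq> 0\<^sub>v d\<close>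
    by (auto simp: e_def y_def)
  have "complex_of_real p \<cdot>\<^sub>m pure_state x = complex_of_real q \<cdot>\<^sub>m pure_state y"
    using p q outer_smult_unimodular[OF unit] by simp
  then have "x $ k * y $ j = y $ k * x $ j"
    by (rule scaled_pure_states_eq_parallel)
      (use \<open>p > 0\<close> assms(1,2) dx xj \<open>\<beta> * \<phi> $ j \<noteq> 0\<close> in simp_all)
  then have "2 * \<alpha> * (\<beta> * \<phi> $ j) = 0"
    using xj yj xk yk by (simp add: algebra_simps)
  with \<open>\<alpha> \<noteq> 0\<close> \<open>\<beta> * \<phi> $ j \<noteq> 0\<close> show False by simp
qed

theorem theorem1:
  fixes d :: nat and \<alpha> \<beta> :: complex and \<phi> :: "complex vec"
  assumes "d \<ge> 2"
    and "\<alpha> \<noteq> 0" and "\<beta> \<noteq> 0"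
    and "(cmod \<alpha>)^2 + (cmod \<beta>)^2 = 1"
    and "is_unit_vec d \<phi>"
  shows "\<not> (\<exists>F. quantum_op (d * d) d F \<and>
            (\<forall>\<psi>. is_unit_vec d \<psi> \<and> \<alpha> \<cdot>\<^sub>v \<psi> + \<beta> \<cdot>\<^sub>v \<phi> \<noteq> 0\<^sub>v d \<longrightarrow>
               (\<exists>p::real. p > 0 \<and>
                  F (kron (outer \<psi>) (outer \<phi>)) = complex_of_real p \<cdot>\<^sub>m pure_state (\<alpha> \<cdot>\<^sub>v \<psi> + \<beta> \<cdot>\<^sub>v \<phi>))))"
proof -
  obtain j where "j < d" "\<phi> $ j \<noteq> 0"
    using is_unit_vec_nonzero_entry[OF assms(5)] .
  define k :: nat where "k = (if j = 0 then 1 else 0)"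
  have "k < d" "k \<noteq> j" using \<open>d \<ge> 2\<close> by (auto simp: k_def)
  have "\<phi> \<in> carrier_vec d" using assms(5) by (simp add: is_unit_vec_def)
  then show ?thesis
    using no_phase_insensitive_superposition[OF \<open>k < d\<close> \<open>j < d\<close> \<open>k \<noteq> j\<close>] \<open>\<phi> $ j \<noteq> 0\<close> assms(2,3)
    by blast
qed

end
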